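(* Let $k\ge1$. For all $0\le y_1\le y_2\le\dots\le y_k\le1$ we have $H_k(y_1,\dots,y_k)\ge0$, where \[ H_k(y_1,\dots,y_k):=\sum_{i=1}^{k}(1-y_i)\,y_{i+1}y_{i+2}\cdots y_k\;f_k(y_1)f_k(y_2)\cdots f_k(y_{i-1})\;-\;\prod_{i=1}^k f_k(y_i), \] with empty products equal to $1$.
   Context: For an integer $k\ge1$, $f_k:[0,1]\to[0,1]$ denotes the unique decreasing function satisfying $f_k(x)^k-f_k(x)^{k+1}=x^k-x^{k+1}$ for all $x\in[0,1]$; it is continuous with $f_k(0)=1$, $f_k(1)=0$. *)

theory Defs
  imports "HOL-Analysis.Analysis"
begin

definition fk :: "nat \<Rightarrow> real \<Rightarrow> real" where
  "fk k = (THE g. (\<forall>x\<in>{0..1}. \<forall>y\<in>{0..1}. x \<le> y \<longrightarrow> g y \<le> g x)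
                 \<and> (\<forall>x\<in>{0..1}. g x \<in> {0..1} \<and> g x ^ k - g x ^ (k+1) = x ^ k - x ^ (k+1))
                 \<and> (\<forall>x. x \<notin> {0..1} \<longrightarrow> g x = 0))"

definition Hk :: "nat \<Rightarrow> (nat \<Rightarrow> real) \<Rightarrow> real" where
  "Hk k y = (\<Sum>i=1..k. (1 - y i) * (\<Prod>j=i+1..k. y j) * (\<Prod>j=1..i-1. fk k (y j)))
            - (\<Prod>i=1..k. fk k (y i))"

end

theory Submission
  imports Defs
begin

text \<open>
  The polynomial \<open>h_k(t) = t^k - t^(k+1)\<close> is unimodal
  on \<open>[0,1]\<close> with peak at \<open>c = k/(k+1)\<close>, so every \<open>x \<in> [0,1]\<close> has a unique partner on the other
  side of \<open>c\<close> with the same \<open>h_k\<close>-value; the partner map is decreasing and is the only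
  decreasing solution, hence equals \<open>f_k\<close>. Writing \<open>g = f_k(x)\<close> and
  \<open>S_j(x,g) = \<Sum>_(j \<le> m < k) x^m g^(k-1-m)\<close>, the defining equation gives \<open>(1 - g) S_0 = x^k\<close>.

  Second, with \<open>G_j\<close> the partial expression \<open>H\<close> after \<open>j\<close> steps and \<open>P_j = g_1 ... g_j\<close>, we show
  by induction that \<open>G_j S_0(y_j, g_j) + P_j S_j(y_j, g_j) \<ge> 0\<close>: one step multiplies this
  quantity by \<open>y_(j+1)\<close> after moving the evaluation point from \<open>y_j\<close> to \<open>y_(j+1)\<close>, and that move
  can only increase it since \<open>S_j/S_0\<close> increases with \<open>x/g\<close>. At \<open>j = k\<close> the tail \<open>S_k\<close> is empty
  and \<open>S_0 > 0\<close>, so \<open>H_k = G_k \<ge> 0\<close>.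
\<close>

definition hump :: "nat \<Rightarrow> real \<Rightarrow> real" where
  "hump k t = t ^ k - t ^ (k + 1)"

abbreviation crit :: "nat \<Rightarrow> real" where
  "crit k \<equiv> real k / (real k + 1)"

lemma crit_bounds: "k \<ge> 1 \<Longrightarrow> 0 < crit k \<and> crit k < 1"
  by (auto simp: field_simps)

lemma hump_continuous: "continuous_on S (hump k)"
  unfolding hump_def by (intro continuous_intros)

lemma hump_nonneg: "0 \<le> x \<Longrightarrow> x \<le> 1 \<Longrightarrow> 0 \<le> hump k x"
  unfolding hump_def using power_decreasing[of k "k + 1" x] by simp

lemma hump_0_1: "k \<ge> 1 \<Longrightarrow> hump k 0 = 0 \<and> hump k 1 = 0"
  unfolding hump_def by simp

text \<open>The derivative in factored form: its sign is that of \<open>k - (k+1) x\<close> for \<open>x > 0\<close>.\<close>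
lemma hump_derivative:
  assumes "k \<ge> 1"
  shows "(hump k has_real_derivative x ^ (k - 1) * (real k - (real k + 1) * x)) (at x)"
proof -
  have "(hump k has_real_derivative real k * x ^ (k - Suc 0) - real (k + 1) * x ^ (k + 1 - Suc 0)) (at x)"
    unfolding hump_def by (intro DERIV_diff DERIV_pow)
  moreover have "x ^ k = x ^ (k - 1) * x"
    using assms by (cases k) auto
  ultimately show ?thesis
    by (simp add: algebra_simps)
qed

lemma hump_strict_mono_left:
  assumes k: "k \<ge> 1" and st: "0 \<le> s" "s < t" "t \<le> crit k"
  shows "hump k s < hump k t"
proof (rule DERIV_pos_imp_increasing_open[OF st(2) _ hump_continuous])
  fix x assume x: "s < x" "x < t"
  have "(real k + 1) * x < (real k + 1) * crit k"
    using x st by (intro mult_strict_left_mono) auto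
  also have "\<dots> = real k" by simp
  finally have "0 < real k - (real k + 1) * x" by simp
  hence "0 < x ^ (k - 1) * (real k - (real k + 1) * x)"
    using x st by simp
  thus "\<exists>d. (hump k has_real_derivative d) (at x) \<and> 0 < d"
    using hump_derivative[OF k] by blast
qed

lemma hump_strict_antimono_right:
  assumes k: "k \<ge> 1" and st: "crit k \<le> s" "s < t" "t \<le> 1"
  shows "hump k t < hump k s"
proof (rule DERIV_neg_imp_decreasing_open[OF st(2) _ hump_continuous])
  fix x assume x: "s < x" "x < t"
  have "0 < x" using x st crit_bounds[OF k] by linarith
  have "real k = (real k + 1) * crit k" by simp
  also have "\<dots> < (real k + 1) * x"
    using x st by (intro mult_strict_left_mono) auto
  finally have "real k - (real k + 1) * x < 0" by simp
  hence "x ^ (k - 1) * (real k - (real k + 1) * x) < 0"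
    using \<open>0 < x\<close> by (simp add: mult_pos_neg)
  thus "\<exists>d. (hump k has_real_derivative d) (at x) \<and> d < 0"
    using hump_derivative[OF k] by blast
qed

lemma hump_le_iff_left:
  assumes "k \<ge> 1" "0 \<le> s" "s \<le> crit k" "0 \<le> t" "t \<le> crit k"
  shows "hump k s \<le> hump k t \<longleftrightarrow> s \<le> t"
  using hump_strict_mono_left[OF assms(1), of s t] hump_strict_mono_left[OF assms(1), of t s] assms
  by (cases s t rule: linorder_cases) auto

lemma hump_le_iff_right:
  assumes "k \<ge> 1" "crit k \<le> s" "s \<le> 1" "crit k \<le> t" "t \<le> 1"
  shows "hump k s \<le> hump k t \<longleftrightarrow> t \<le> s"
  using hump_strict_antimono_right[OF assms(1), of s t] hump_strict_antimono_right[OF assms(1), of t s] assms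
  by (cases s t rule: linorder_cases) auto

text \<open>Every value taken on one side of the critical point is also taken on the other side
  (intermediate value theorem, using \<open>h_k(0) = h_k(1) = 0\<close>).\<close>
lemma hump_attains_right:
  assumes k: "k \<ge> 1" and x: "0 \<le> x" "x \<le> crit k"
  shows "\<exists>t. crit k \<le> t \<and> t \<le> 1 \<and> hump k t = hump k x"
proof -
  have "hump k 1 \<le> hump k x" "hump k x \<le> hump k (crit k)"
    using hump_0_1[OF k] hump_nonneg[of x k] x crit_bounds[OF k] hump_le_iff_left[OF k, of x "crit k"]
    by auto
  thus ?thesis
    using IVT2'[of "hump k" 1 "hump k x" "crit k"] crit_bounds[OF k] hump_continuous by auto
qed

lemma hump_attains_left:
  assumes k: "k \<ge> 1" and x: "crit k \<le> x" "x \<le> 1"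
  shows "\<exists>t. 0 \<le> t \<and> t \<le> crit k \<and> hump k t = hump k x"
proof -
  have "hump k 0 \<le> hump k x" "hump k x \<le> hump k (crit k)"
    using hump_0_1[OF k] hump_nonneg[of x k] x crit_bounds[OF k] hump_le_iff_right[OF k, of "crit k" x]
    by auto
  thus ?thesis
    using IVT'[of "hump k" 0 "hump k x" "crit k"] crit_bounds[OF k] hump_continuous by auto
qed

definition partner :: "nat \<Rightarrow> real \<Rightarrow> real \<Rightarrow> bool" where
  "partner k x t \<longleftrightarrow> 0 \<le> t \<and> t \<le> 1 \<and> hump k t = hump k x
     \<and> (x \<le> crit k \<longrightarrow> crit k \<le> t) \<and> (crit k \<le> x \<longrightarrow> t \<le> crit k)"

lemma partner_unique:
  assumes k: "k \<ge> 1" and "partner k x s" "partner k x t"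
  shows "s = t"
proof (cases "x \<le> crit k")
  case True
  thus ?thesis using assms hump_le_iff_right[OF k, of s t] hump_le_iff_right[OF k, of t s]
    unfolding partner_def by auto
next
  case False
  thus ?thesis using assms hump_le_iff_left[OF k, of s t] hump_le_iff_left[OF k, of t s]
    unfolding partner_def by auto
qed

lemma partner_exists:
  assumes k: "k \<ge> 1" and x: "0 \<le> x" "x \<le> 1"
  shows "\<exists>t. partner k x t"
proof (cases "x \<le> crit k")
  case True
  then obtain t where "crit k \<le> t" "t \<le> 1" "hump k t = hump k x"
    using hump_attains_right[OF k x(1)] by blast
  hence "partner k x t"
    using True crit_bounds[OF k] hump_le_iff_right[OF k, of "crit k" t] unfolding partner_def by auto
  thus ?thesis ..
next
  case False
  then obtain t where "0 \<le> t" "t \<le> crit k" "hump k t = hump k x"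
    using hump_attains_left[OF k _ x(2)] by auto
  moreover have "t \<le> 1" using \<open>t \<le> crit k\<close> crit_bounds[OF k] by linarith
  ultimately have "partner k x t" using False unfolding partner_def by auto
  thus ?thesis ..
qed

definition mirror :: "nat \<Rightarrow> real \<Rightarrow> real" where
  "mirror k x = (if x \<in> {0..1} then THE t. partner k x t else 0)"

lemma mirror_partner:
  assumes k: "k \<ge> 1" and x: "0 \<le> x" "x \<le> 1"
  shows "partner k x (mirror k x)"
proof -
  have "\<exists>!t. partner k x t"
    using partner_exists[OF k x] partner_unique[OF k] by blast
  thus ?thesis using x unfolding mirror_def by (simp add: theI')
qed

text \<open>The partner map is decreasing: on each side it composes an increasing branch of \<open>h_k\<close>
  with a decreasing inverse branch, and it swaps the two sides.\<close>
lemma mirror_antimono: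
  assumes k: "k \<ge> 1" and xy: "0 \<le> x" "x \<le> y" "y \<le> 1"
  shows "mirror k y \<le> mirror k x"
proof -
  note px = mirror_partner[OF k, of x] and py = mirror_partner[OF k, of y]
  consider "y \<le> crit k" | "crit k \<le> x" | "x \<le> crit k" "crit k \<le> y" by linarith
  thus ?thesis
  proof cases
    case 1
    hence "hump k x \<le> hump k y" using hump_le_iff_left[OF k, of x y] xy by simp
    thus ?thesis using 1 px py xy hump_le_iff_right[OF k, of "mirror k x" "mirror k y"]
      unfolding partner_def by auto
  next
    case 2
    hence "hump k y \<le> hump k x" using hump_le_iff_right[OF k, of y x] xy by simp
    thus ?thesis using 2 px py xy hump_le_iff_left[OF k, of "mirror k y" "mirror k x"]
      unfolding partner_def by auto
  next
    case 3
    thus ?thesis using px py xy unfolding partner_def by auto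
  qed
qed

definition is_fk :: "nat \<Rightarrow> (real \<Rightarrow> real) \<Rightarrow> bool" where
  "is_fk k g \<longleftrightarrow> (\<forall>x\<in>{0..1}. \<forall>y\<in>{0..1}. x \<le> y \<longrightarrow> g y \<le> g x)
                 \<and> (\<forall>x\<in>{0..1}. g x \<in> {0..1} \<and> g x ^ k - g x ^ (k+1) = x ^ k - x ^ (k+1))
                 \<and> (\<forall>x. x \<notin> {0..1} \<longrightarrow> g x = 0)"

lemma is_fk_mirror: "k \<ge> 1 \<Longrightarrow> is_fk k (mirror k)"
  using mirror_antimono mirror_partner unfolding is_fk_def partner_def hump_def
  by (auto simp: mirror_def)

lemma is_fk_D:
  assumes "is_fk k g"
  shows "\<And>x y. 0 \<le> x \<Longrightarrow> x \<le> y \<Longrightarrow> y \<le> 1 \<Longrightarrow> g y \<le> g x"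
    and "\<And>x. 0 \<le> x \<Longrightarrow> x \<le> 1 \<Longrightarrow> 0 \<le> g x \<and> g x \<le> 1 \<and> hump k (g x) = hump k x"
  using assms unfolding is_fk_def hump_def by auto

text \<open>Otherwise it
  would fix some \<open>x\<close> (by injectivity of \<open>h_k\<close> on one side), and being decreasing it would
  map a point slightly beyond \<open>x\<close> below itself on the same side, contradicting injectivity.\<close>
lemma is_fk_left_to_right:
  assumes g: "is_fk k g" and k: "k \<ge> 1" and x: "0 \<le> x" "x \<le> crit k"
  shows "crit k \<le> g x"
proof (rule ccontr)
  assume "\<not> ?thesis"
  hence gx: "g x < crit k" by simp
  have fixed: "g t = t" if "0 \<le> t" "t \<le> crit k" "g t \<le> crit k" for t
    using is_fk_D(2)[OF g, of t] that crit_bounds[OF k]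
      hump_le_iff_left[OF k, of t "g t"] hump_le_iff_left[OF k, of "g t" t] by auto
  have "g x = x" using fixed[OF x] gx by simp
  hence "x < crit k" using gx by simp
  obtain x' where x': "x < x'" "x' < crit k" using dense[OF \<open>x < crit k\<close>] by blast
  have "g x' \<le> g x" using is_fk_D(1)[OF g x(1), of x'] x' crit_bounds[OF k] by simp
  hence "g x' < x'" using \<open>g x = x\<close> x' by simp
  moreover have "g x' = x'" using fixed[of x'] \<open>g x' < x'\<close> x' x by simp
  ultimately show False by simp
qed

lemma is_fk_right_to_left:
  assumes g: "is_fk k g" and k: "k \<ge> 1" and x: "crit k \<le> x" "x \<le> 1"
  shows "g x \<le> crit k"
proof (rule ccontr)
  assume "\<not> ?thesis"
  hence gx: "crit k < g x" by simp
  have fixed: "g t = t" if "crit k \<le> t" "t \<le> 1" "crit k \<le> g t" for t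
    using is_fk_D(2)[OF g, of t] that crit_bounds[OF k]
      hump_le_iff_right[OF k, of t "g t"] hump_le_iff_right[OF k, of "g t" t] by auto
  have "g x = x" using fixed[OF x] gx by simp
  hence "crit k < x" using gx by simp
  obtain x' where x': "x' < x" "crit k < x'" using dense[OF \<open>crit k < x\<close>] by blast
  have "g x \<le> g x'" using is_fk_D(1)[OF g, of x' x] x' x crit_bounds[OF k] by simp
  hence "x' < g x'" using \<open>g x = x\<close> x' by simp
  moreover have "g x' = x'" using fixed[of x'] \<open>x' < g x'\<close> x' x by simp
  ultimately show False by simp
qed

lemma is_fk_eq_mirror:
  assumes g: "is_fk k g" and k: "k \<ge> 1"
  shows "g = mirror k"
proof
  fix x
  show "g x = mirror k x"
  proof (cases "x \<in> {0..1}")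
    case True
    hence "partner k x (g x)"
      using is_fk_D(2)[OF g, of x] is_fk_left_to_right[OF g k, of x] is_fk_right_to_left[OF g k, of x]
      unfolding partner_def by auto
    thus ?thesis using partner_unique[OF k] mirror_partner[OF k, of x] True by auto
  next
    case False
    thus ?thesis using g unfolding is_fk_def mirror_def by auto
  qed
qed

lemma fk_eq_mirror:
  assumes k: "k \<ge> 1"
  shows "fk k = mirror k"
proof -
  have "\<exists>!g. is_fk k g" using is_fk_mirror[OF k] is_fk_eq_mirror[OF _ k] by blast
  hence "is_fk k (fk k)" unfolding fk_def is_fk_def[symmetric] by (rule theI')
  thus ?thesis using is_fk_eq_mirror[OF _ k] by blast
qed

lemma fk_partner: "k \<ge> 1 \<Longrightarrow> 0 \<le> x \<Longrightarrow> x \<le> 1 \<Longrightarrow> partner k x (fk k x)"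
  using fk_eq_mirror mirror_partner by simp

lemma fk_antimono: "k \<ge> 1 \<Longrightarrow> 0 \<le> x \<Longrightarrow> x \<le> y \<Longrightarrow> y \<le> 1 \<Longrightarrow> fk k y \<le> fk k x"
  using fk_eq_mirror mirror_antimono by simp

text \<open>Tails of the homogeneous sum \<open>x^(k-1) + x^(k-2) g + ... + g^(k-1) = (x^k - g^k)/(x - g)\<close>,
  starting from the term \<open>x^j g^(k-1-j)\<close>.\<close>
definition gsum :: "nat \<Rightarrow> nat \<Rightarrow> real \<Rightarrow> real \<Rightarrow> real" where
  "gsum k j x g = (\<Sum>m = j..<k. x ^ m * g ^ (k - 1 - m))"

lemma gsum_telescope:
  assumes "j < k"
  shows "x * gsum k j x g - g * gsum k (j + 1) x g = x ^ k"
proof -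
  have "x * gsum k j x g = (\<Sum>m = Suc j..<Suc k. x ^ m * g ^ (k - m))"
    unfolding gsum_def sum_distrib_left sum.shift_bounds_Suc_ivl
    by (intro sum.cong) (auto simp: algebra_simps)
  also have "\<dots> = (\<Sum>m = Suc j..<k. x ^ m * g ^ (k - m)) + x ^ k"
    using assms by (simp add: sum.atLeastLessThan_Suc)
  also have "(\<Sum>m = Suc j..<k. x ^ m * g ^ (k - m)) = g * gsum k (j + 1) x g"
    unfolding gsum_def sum_distrib_left
  proof (rule sum.cong)
    fix m assume "m \<in> {j + 1..<k}"
    hence "k - m = Suc (k - 1 - m)" by auto
    thus "x ^ m * g ^ (k - m) = g * (x ^ m * g ^ (k - 1 - m))" by simp
  qed simp
  finally show ?thesis by simp
qed

text \<open>The key identity: for \<open>g = f_k(x)\<close> the equation \<open>g^k(1-g) = x^k(1-x)\<close> becomes, after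
  dividing by \<open>x - g\<close>, the relation \<open>(1 - g) (x^k - g^k)/(x - g) = x^k\<close>.\<close>
lemma gsum_partner:
  assumes k: "k \<ge> 1" and p: "partner k x g"
  shows "(1 - g) * gsum k 0 x g = x ^ k"
proof (cases "g = x")
  case True
  hence x: "x = crit k" using p unfolding partner_def by auto
  have "gsum k 0 x g = real k * x ^ (k - 1)"
    unfolding gsum_def using True by (simp flip: power_add)
  moreover have "(1 - x) * real k = x" using x by (simp add: field_simps)
  moreover have "x * x ^ (k - 1) = x ^ k" using k by (cases k) auto
  ultimately show ?thesis using True by (metis mult.assoc)
next
  case False
  have diff: "x ^ k - g ^ k = (x - g) * gsum k 0 x g"
    unfolding power_diff_sumr2 gsum_def atLeast0LessThan
    by (intro arg_cong[where f = "\<lambda>s. (x - g) * s"] sum.cong) (auto simp: algebra_simps)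
  have "(x - g) * ((1 - g) * gsum k 0 x g - x ^ k) = (x ^ k - x ^ (k + 1)) - (g ^ k - g ^ (k + 1))"
    unfolding right_diff_distrib mult.left_commute[of "x - g"] diff[symmetric]
    by (simp add: algebra_simps)
  also have "\<dots> = 0" using p unfolding partner_def hump_def by simp
  finally show ?thesis using False by simp
qed

lemma gsum_partner_pos:
  assumes k: "k \<ge> 1" and x: "0 \<le> x" and p: "partner k x g"
  shows "0 < gsum k 0 x g"
proof -
  have g: "0 \<le> g" using p unfolding partner_def by simp
  have x_term: "x ^ (k - 1) * g ^ (k - 1 - (k - 1)) \<le> gsum k 0 x g"
    unfolding gsum_def using k x g
    by (intro member_le_sum[of "k - 1" _ "\<lambda>m. x ^ m * g ^ (k - 1 - m)"]) auto
  have g_term: "x ^ 0 * g ^ (k - 1 - 0) \<le> gsum k 0 x g"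
    unfolding gsum_def using k x g
    by (intro member_le_sum[of 0 _ "\<lambda>m. x ^ m * g ^ (k - 1 - m)"]) auto
  have "0 < x \<or> 0 < g"
    using x p crit_bounds[OF k] unfolding partner_def by force
  thus ?thesis
  proof
    assume "0 < x"
    hence "0 < x ^ (k - 1) * g ^ (k - 1 - (k - 1))" by simp
    thus ?thesis using x_term by linarith
  next
    assume "0 < g"
    hence "0 < x ^ 0 * g ^ (k - 1 - 0)" by simp
    thus ?thesis using g_term by linarith
  qed
qed

text \<open>The proportion of the full sum carried by the tail from index \<open>j\<close> grows with the ratio
  \<open>x/g\<close>: cross-multiplied, term by term, \<open>(a gb)^d \<le> (b ga)^d\<close>.\<close>
lemma gsum_ratio_mono:
  assumes "0 \<le> a" "a \<le> b" "0 \<le> gb" "gb \<le> ga" "j \<le> k"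
  shows "gsum k j a ga * gsum k 0 b gb \<le> gsum k j b gb * gsum k 0 a ga"
proof -
  have term_le: "a ^ m * ga ^ (k - Suc m) * (b ^ n * gb ^ (k - Suc n))
      \<le> b ^ m * gb ^ (k - Suc m) * (a ^ n * ga ^ (k - Suc n))" if "n < m" "m < k" for m n
  proof -
    define d where "d = m - n"
    have m: "m = n + d" and kn: "k - Suc n = (k - Suc m) + d" using that unfolding d_def by auto
    define C where "C = a ^ n * b ^ n * ga ^ (k - Suc m) * gb ^ (k - Suc m)"
    have "0 \<le> C" unfolding C_def using assms by simp
    moreover have "(a * gb) ^ d \<le> (b * ga) ^ d"
      using assms by (intro power_mono mult_mono) auto
    ultimately have "C * (a * gb) ^ d \<le> C * (b * ga) ^ d" by (rule mult_left_mono[rotated])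
    thus ?thesis unfolding C_def m kn by (simp add: power_add power_mult_distrib algebra_simps)
  qed
  have "gsum k j a ga * (\<Sum>n = 0..<j. b ^ n * gb ^ (k - 1 - n))
      \<le> gsum k j b gb * (\<Sum>n = 0..<j. a ^ n * ga ^ (k - 1 - n))"
    unfolding gsum_def sum_product by (intro sum_mono) (auto intro!: term_le)
  moreover have "gsum k 0 x g = (\<Sum>n = 0..<j. x ^ n * g ^ (k - 1 - n)) + gsum k j x g" for x g
    unfolding gsum_def
    using sum.atLeastLessThan_concat[of 0 j k "\<lambda>m. x ^ m * g ^ (k - 1 - m)"] assms(5) by simp
  ultimately show ?thesis by (simp add: algebra_simps)
qed

definition Hpart :: "(nat \<Rightarrow> real) \<Rightarrow> (nat \<Rightarrow> real) \<Rightarrow> nat \<Rightarrow> real" where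
  "Hpart y g n = (\<Sum>i = 1..n. (1 - y i) * (\<Prod>j = i+1..n. y j) * (\<Prod>j = 1..i-1. g j))
                 - (\<Prod>i = 1..n. g i)"

lemma Hpart_Suc: "Hpart y g (Suc n) = y (Suc n) * Hpart y g n + (1 - g (Suc n)) * (\<Prod>j = 1..n. g j)"
proof -
  have "(\<Sum>i = 1..n. (1 - y i) * (\<Prod>j = i+1..Suc n. y j) * (\<Prod>j = 1..i-1. g j))
      = y (Suc n) * (\<Sum>i = 1..n. (1 - y i) * (\<Prod>j = i+1..n. y j) * (\<Prod>j = 1..i-1. g j))"
    unfolding sum_distrib_left by (intro sum.cong) (auto simp: prod.cl_ivl_Suc)
  thus ?thesis unfolding Hpart_def by (simp add: sum.cl_ivl_Suc prod.cl_ivl_Suc algebra_simps)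
qed

lemma Hk_eq_Hpart: "Hk k y = Hpart y (\<lambda>i. fk k (y i)) k"
  unfolding Hk_def Hpart_def ..

lemma Hk_ignores_0: "Hk k (y(0 := a)) = Hk k y"
  unfolding Hk_def by (intro arg_cong2[where f = minus] sum.cong prod.cong) auto

lemma invariant_identity:
  assumes j: "j < k" and key: "(1 - gb) * gsum k 0 b gb = b ^ k"
  shows "(b * G + (1 - gb) * P) * gsum k 0 b gb + (P * gb) * gsum k (j + 1) b gb
       = b * (G * gsum k 0 b gb + P * gsum k j b gb)"
proof -
  have "(b * G + (1 - gb) * P) * gsum k 0 b gb + (P * gb) * gsum k (j + 1) b gb
      = b * G * gsum k 0 b gb + P * ((1 - gb) * gsum k 0 b gb + gb * gsum k (j + 1) b gb)"
    by (simp add: algebra_simps)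
  also have "(1 - gb) * gsum k 0 b gb + gb * gsum k (j + 1) b gb = b * gsum k j b gb"
    using key gsum_telescope[OF j, of b gb] by simp
  finally show ?thesis by (simp add: algebra_simps)
qed

lemma invariant_step:
  assumes j: "j < k"
    and hyp: "0 \<le> G * gsum k 0 a ga + P * gsum k j a ga"
    and pos: "0 < gsum k 0 a ga" "0 < gsum k 0 b gb" and P: "0 \<le> P"
    and ab: "0 \<le> a" "a \<le> b" "0 \<le> gb" "gb \<le> ga"
    and key: "(1 - gb) * gsum k 0 b gb = b ^ k"
  shows "0 \<le> (b * G + (1 - gb) * P) * gsum k 0 b gb + (P * gb) * gsum k (j + 1) b gb"
proof -
  define A where "A = gsum k 0 a ga"
  define B where "B = gsum k 0 b gb"
  have ratio: "P * (gsum k j a ga * B) \<le> P * (gsum k j b gb * A)"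
    unfolding A_def B_def using gsum_ratio_mono[OF ab] j P by (simp add: mult_left_mono)
  have "A * (G * B + P * gsum k j b gb)
      = (G * A + P * gsum k j a ga) * B + (P * (gsum k j b gb * A) - P * (gsum k j a ga * B))"
    by (simp add: algebra_simps)
  also have "\<dots> \<ge> 0" using hyp pos ratio unfolding A_def B_def by simp
  finally have "0 \<le> G * B + P * gsum k j b gb"
    using pos unfolding A_def by (simp add: zero_le_mult_iff)
  thus ?thesis
    using invariant_identity[OF j key] ab unfolding B_def by simp
qed

lemma Hpart_invariant:
  fixes z :: "nat \<Rightarrow> real"
  assumes k: "k \<ge> 1"
    and z01: "\<And>i. i \<le> k \<Longrightarrow> 0 \<le> z i \<and> z i \<le> 1"
    and zmono: "\<And>i. i < k \<Longrightarrow> z i \<le> z (Suc i)"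
    and "j \<le> k"
  defines "g \<equiv> \<lambda>i. fk k (z i)"
  shows "0 \<le> Hpart z g j * gsum k 0 (z j) (g j) + (\<Prod>i = 1..j. g i) * gsum k j (z j) (g j)"
  using \<open>j \<le> k\<close>
proof (induction j)
  case 0
  thus ?case by (simp add: Hpart_def)
next
  case (Suc j)
  have j: "j < k" using Suc.prems by simp
  have p: "partner k (z i) (g i)" if "i \<le> k" for i
    unfolding g_def using fk_partner[OF k] z01[OF that] by simp
  have P: "0 \<le> (\<Prod>i = 1..j. g i)"
    using p j unfolding partner_def by (intro prod_nonneg) auto
  have "g (Suc j) \<le> g j"
    unfolding g_def using fk_antimono[OF k] z01 zmono[OF j] j by simp
  hence "0 \<le> (z (Suc j) * Hpart z g j + (1 - g (Suc j)) * (\<Prod>i = 1..j. g i)) * gsum k 0 (z (Suc j)) (g (Suc j))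
             + ((\<Prod>i = 1..j. g i) * g (Suc j)) * gsum k (j + 1) (z (Suc j)) (g (Suc j))"
    using invariant_step[OF j Suc.IH[OF less_imp_le[OF j]] _ _ P]
      gsum_partner_pos[OF k] gsum_partner[OF k] p z01 zmono[OF j] j Suc.prems
    unfolding partner_def by simp
  thus ?case by (simp add: Hpart_Suc prod.cl_ivl_Suc)
qed

text \<open>Main theorem: extend \<open>y\<close> by \<open>y_0 := y_1\<close> (which does not change \<open>H_k\<close>) and apply the
  invariant at \<open>j = k\<close>, where the tail \<open>S_k\<close> vanishes and \<open>S_0 > 0\<close>.\<close>
theorem mainTheorem5:
  fixes k :: nat and y :: "nat \<Rightarrow> real"
  assumes "k \<ge> 1"
    and "0 \<le> y 1"
    and "\<And>i. 1 \<le> i \<Longrightarrow> i < k \<Longrightarrow> y i \<le> y (i+1)"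
    and "y k \<le> 1"
  shows "Hk k y \<ge> 0"
proof -
  define z where "z = y(0 := y 1)"
  have zmono: "z i \<le> z (Suc i)" if "i < k" for i
    using assms(3)[of i] that unfolding z_def by (cases i) auto
  have z01: "0 \<le> z i \<and> z i \<le> 1" if "i \<le> k" for i
  proof -
    have "z 0 \<le> z i" "z i \<le> z k"
      using lift_Suc_mono_le_ivl[of "{..<k}" z] zmono that by (auto simp: subset_eq)
    moreover have "z 0 = y 1" "z k = y k" using \<open>k \<ge> 1\<close> unfolding z_def by auto
    ultimately show ?thesis using assms(2,4) by simp
  qed
  have "0 \<le> Hpart z (\<lambda>i. fk k (z i)) k * gsum k 0 (z k) (fk k (z k))"
    using Hpart_invariant[where z = z and j = k, OF assms(1) z01 zmono] by (simp add: gsum_def)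
  moreover have "0 < gsum k 0 (z k) (fk k (z k))"
    using gsum_partner_pos[OF assms(1)] fk_partner[OF assms(1)] z01[of k] by simp
  ultimately have "0 \<le> Hk k z"
    unfolding Hk_eq_Hpart by (simp add: zero_le_mult_iff)
  thus ?thesis unfolding z_def Hk_ignores_0 .
qed

end
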